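(* Let $N\ge 2$ be an integer and consider the one-mode projection graph $G_N$ on the primes $\le N$ defined below. Let $p_k$ denote the $k$-th prime ($p_1=2,p_2=3,\dots$) and set $p_0=1$. For a nonnegative integer $k$, let $P(k)$ be the fraction of primes $p\le N$ whose degree in $G_N$ equals $k$. Then $$P(k)=\frac{\pi\left(\frac{N}{p_k}\right)-\pi\left(\frac{N}{p_{k+1}}\right)}{\pi(N)},$$ where $\pi(x)$ is the number of primes $\le x$.
   Context: The graph $G_N$ has vertex set the primes $p\le N$. Two distinct primes $p,p'\le N$ are adjacent iff some composite integer $c\le N$ is divisible by both $p$ and $p'$. A prime $p$ carries a self-loop iff $p^2\le N$. The degree of $p$ is the number of distinct primes $p'\ne p$ adjacent to $p$, plus $1$ if $p$ carries a self-loop. *)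

theory Defs
  imports Complex_Main "HOL-Computational_Algebra.Primes" "HOL-Library.Infinite_Set"
begin

definition prime_pi :: "real \<Rightarrow> nat" where
  "prime_pi x = card {p::nat. prime p \<and> real p \<le> x}"

text \<open>p_k: p_0 = 1, p_1 = 2, p_2 = 3, ... (enumerate is 0-indexed).\<close>
definition pk :: "nat \<Rightarrow> nat" where
  "pk k = (if k = 0 then 1 else enumerate {p::nat. prime p} (k - 1))"

definition composite :: "nat \<Rightarrow> bool" where
  "composite c \<longleftrightarrow> c > 1 \<and> \<not> prime c"

definition adjG :: "nat \<Rightarrow> nat \<Rightarrow> nat \<Rightarrow> bool" where
  "adjG N p q \<longleftrightarrow> prime p \<and> prime q \<and> p \<le> N \<and> q \<le> N \<and> p \<noteq> q \<and>
     (\<exists>c. composite c \<and> c \<le> N \<and> p dvd c \<and> q dvd c)"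

definition selfloopG :: "nat \<Rightarrow> nat \<Rightarrow> bool" where
  "selfloopG N p \<longleftrightarrow> p ^ 2 \<le> N"

definition degG :: "nat \<Rightarrow> nat \<Rightarrow> nat" where
  "degG N p = card {q. q \<noteq> p \<and> adjG N p q} + (if selfloopG N p then 1 else 0)"

definition degdist :: "nat \<Rightarrow> nat \<Rightarrow> real" where
  "degdist N k = real (card {p. prime p \<and> p \<le> N \<and> degG N p = k})
                 / real (card {p::nat. prime p \<and> p \<le> N})"

end

theory Submission
  imports Defs
begin

(*
  In G_N two distinct primes p, q are adjacent iff pq <= N: a composite multiple of both is a
  multiple of pq, and pq itself is such a multiple.  Together with the self-loop (p * p <= N),
  the degree of p is the number of primes q with pq <= N, i.e. pi(N/p).  As pi(x) >= j iff
  p_j <= x, the degree is k exactly when N/p_{k+1} < p <= N/p_k, and counting these primes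
  gives pi(N/p_k) - pi(N/p_{k+1}).
*)

lemma finite_nat_le_real: "finite {n::nat. real n \<le> x}"
  by (rule finite_subset[of _ "{..nat \<lfloor>x\<rfloor>}"]) (auto simp: le_nat_floor)

lemma less_card_enumerate_iff:
  fixes S :: "nat set" and x :: real
  assumes S: "infinite S"
  shows "n < card {s \<in> S. real s \<le> x} \<longleftrightarrow> real (enumerate S n) \<le> x"
proof
  assume n: "n < card {s \<in> S. real s \<le> x}"
  show "real (enumerate S n) \<le> x"
  proof (rule ccontr)
    assume above: "\<not> real (enumerate S n) \<le> x"
    have "{s \<in> S. real s \<le> x} \<subseteq> enumerate S ` {..<n}"
    proof
      fix s assume s: "s \<in> {s \<in> S. real s \<le> x}"
      then obtain i where i: "enumerate S i = s" using enumerate_Ex[OF S] by blast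
      have "real (enumerate S i) < real (enumerate S n)" using s i above by simp
      then have "i < n" using S by simp
      then show "s \<in> enumerate S ` {..<n}" using i by blast
    qed
    then have "card {s \<in> S. real s \<le> x} \<le> card (enumerate S ` {..<n})"
      by (intro card_mono) simp_all
    also have "\<dots> \<le> n"
      using card_image_le[of "{..<n}" "enumerate S"] by simp
    finally show False using n by simp
  qed
next
  assume en: "real (enumerate S n) \<le> x"
  have "enumerate S ` {..n} \<subseteq> {s \<in> S. real s \<le> x}"
  proof
    fix s assume "s \<in> enumerate S ` {..n}"
    then obtain i where "i \<le> n" "s = enumerate S i" by blast
    then have "s \<in> S" "s \<le> enumerate S n" using S enumerate_in_set by simp_all
    then show "s \<in> {s \<in> S. real s \<le> x}" using en by simp
  qed
  then have "card (enumerate S ` {..n}) \<le> card {s \<in> S. real s \<le> x}"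
    by (rule card_mono[rotated]) (rule finite_subset[OF _ finite_nat_le_real[of x]], blast)
  moreover have "card (enumerate S ` {..n}) = Suc n"
    using card_image[OF inj_on_subset[OF inj_enumerate[OF S]]] by simp
  ultimately show "n < card {s \<in> S. real s \<le> x}" by simp
qed

lemma pos_mult_le_imp_le:
  fixes d q N :: nat
  assumes "d > 0" "d * q \<le> N"
  shows "q \<le> N"
proof -
  have "q \<le> d * q"
    using assms(1) by simp
  with assms(2) show ?thesis by linarith
qed

lemma of_nat_le_divide_iff:
  assumes "d > 0"
  shows "real q \<le> real N / real d \<longleftrightarrow> d * q \<le> N"
proof -
  have "real q \<le> real N / real d \<longleftrightarrow> real (d * q) \<le> real N"
    using assms by (simp add: pos_le_divide_eq mult.commute)
  then show ?thesis by (simp only: of_nat_le_iff)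
qed

lemma pk_Suc: "pk (Suc n) = enumerate {p. prime p} n"
  by (simp add: pk_def)

lemma prime_pk: "k > 0 \<Longrightarrow> prime (pk k)"
  using enumerate_in_set[OF primes_infinite] by (auto simp: pk_def)

lemma pk_pos: "pk k > 0"
  using prime_pk[of k] by (cases "k = 0") (auto simp: pk_def prime_gt_0_nat)

lemma pk_le_pk_Suc: "pk k \<le> pk (Suc k)"
  using pk_pos[of "Suc k"] by (cases k) (simp_all add: pk_def primes_infinite)

lemma le_prime_pi_iff:
  assumes "x \<ge> 1"
  shows "j \<le> prime_pi x \<longleftrightarrow> real (pk j) \<le> x"
proof (cases j)
  case (Suc n)
  then show ?thesis
    using less_card_enumerate_iff[OF primes_infinite, of n x]
    by (simp add: prime_pi_def pk_Suc Suc_le_eq)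
qed (simp add: pk_def assms)

lemma prime_pi_mono: "x \<le> y \<Longrightarrow> prime_pi x \<le> prime_pi y"
  unfolding prime_pi_def
  by (rule card_mono) (auto intro: finite_subset[OF _ finite_nat_le_real[of y]])

lemma prime_pi_div:
  assumes "d > 0"
  shows "prime_pi (real N / real d) = card {q. prime q \<and> d * q \<le> N}"
  using of_nat_le_divide_iff[OF assms] by (simp add: prime_pi_def)

lemma composite_mult:
  fixes p q :: nat
  assumes "p > 1" "q > 1"
  shows "composite (p * q)"
proof -
  have "\<not> prime (p * q)"
    using assms prime_product[of p q] by auto
  moreover have "p * q > 1"
    using assms by (simp add: one_less_mult)
  ultimately show ?thesis by (simp add: composite_def)
qed

lemma adjG_iff:
  assumes p: "prime p" "p \<le> N"
  shows "adjG N p q \<longleftrightarrow> prime q \<and> q \<noteq> p \<and> p * q \<le> N"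
proof
  assume "adjG N p q"
  then obtain c where c: "composite c" "c \<le> N" "p dvd c" "q dvd c" and q: "prime q" "q \<noteq> p"
    unfolding adjG_def by blast
  have "coprime p q"
    using p q by (simp add: primes_coprime)
  then have "p * q dvd c"
    using c by (simp add: divides_mult)
  moreover have "c > 0"
    using c(1) by (simp add: composite_def)
  ultimately have "p * q \<le> c"
    by (rule dvd_imp_le)
  with c(2) q show "prime q \<and> q \<noteq> p \<and> p * q \<le> N"
    by simp
next
  assume q: "prime q \<and> q \<noteq> p \<and> p * q \<le> N"
  then have "q \<le> N"
    using pos_mult_le_imp_le[OF prime_gt_0_nat[OF p(1)]] by blast
  moreover have "composite (p * q)"
    using q composite_mult[OF prime_gt_1_nat[OF p(1)] prime_gt_1_nat[of q]] by blast
  ultimately show "adjG N p q"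
    using p q unfolding adjG_def by (meson dvd_triv_left dvd_triv_right)
qed

lemma degG_eq_card:
  assumes p: "prime p" "p \<le> N"
  shows "degG N p = card {q. prime q \<and> p * q \<le> N}"
proof -
  define Q where "Q = {q. prime q \<and> p * q \<le> N}"
  have "Q \<subseteq> {..N}"
    using pos_mult_le_imp_le[OF prime_gt_0_nat[OF p(1)]] by (auto simp: Q_def)
  then have fin: "finite Q"
    by (rule finite_subset) simp
  have nbrs: "{q. q \<noteq> p \<and> adjG N p q} = Q - {p}"
    using adjG_iff[OF p] by (auto simp: Q_def)
  have loop: "p \<in> Q \<longleftrightarrow> selfloopG N p"
    using p by (simp add: Q_def selfloopG_def power2_eq_square)
  show ?thesis
  proof (cases "selfloopG N p")
    case True
    then show ?thesis
      using card.remove[OF fin] loop unfolding degG_def nbrs Q_def[symmetric] by simp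
  next
    case False
    then show ?thesis
      using loop unfolding degG_def nbrs Q_def[symmetric] by simp
  qed
qed

lemma degG_eq_iff:
  assumes p: "prime p" "p \<le> N"
  shows "degG N p = k \<longleftrightarrow> pk k * p \<le> N \<and> \<not> pk (Suc k) * p \<le> N"
proof -
  have p0: "p > 0"
    using prime_gt_0_nat[OF p(1)] .
  have deg: "degG N p = prime_pi (real N / real p)"
    using degG_eq_card[OF p] prime_pi_div[OF p0] by simp
  have "real N / real p \<ge> 1"
    using p(2) p0 by simp
  then have "j \<le> degG N p \<longleftrightarrow> pk j * p \<le> N" for j
    using deg le_prime_pi_iff of_nat_le_divide_iff[OF p0] by (simp add: mult.commute)
  from this[of k] this[of "Suc k"] show ?thesis
    by (auto simp: not_less_eq_eq)
qed

lemma degree_class_eq: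
  "{p. prime p \<and> p \<le> N \<and> degG N p = k} =
     {p. prime p \<and> pk k * p \<le> N} - {p. prime p \<and> pk (Suc k) * p \<le> N}"
proof -
  have "prime p \<and> p \<le> N \<and> degG N p = k \<longleftrightarrow>
        prime p \<and> pk k * p \<le> N \<and> \<not> pk (Suc k) * p \<le> N" for p
    using degG_eq_iff[of p N k] pos_mult_le_imp_le[OF pk_pos, of k p N] by blast
  then show ?thesis by blast
qed

lemma card_degree_class:
  "card {p. prime p \<and> p \<le> N \<and> degG N p = k} =
     prime_pi (real N / real (pk k)) - prime_pi (real N / real (pk (Suc k)))"
proof -
  define B where "B j = {p. prime p \<and> pk j * p \<le> N}" for j
  have "B (Suc k) \<subseteq> {..N}"
    using pos_mult_le_imp_le[OF pk_pos] by (auto simp: B_def)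
  then have "finite (B (Suc k))"
    using finite_subset by blast
  moreover have "B (Suc k) \<subseteq> B k"
    unfolding B_def using le_trans[OF mult_le_mono1[OF pk_le_pk_Suc]] by blast
  ultimately show ?thesis
    unfolding degree_class_eq prime_pi_div[OF pk_pos] B_def[symmetric] by (rule card_Diff_subset)
qed

theorem mainTheorem9:
  fixes N k :: nat
  assumes "N \<ge> 2"
  shows "degdist N k =
    (real (prime_pi (real N / real (pk k))) - real (prime_pi (real N / real (pk (Suc k)))))
    / real (prime_pi (real N))"
proof -
  have "real N / real (pk (Suc k)) \<le> real N / real (pk k)"
    using pk_pos[of k] pk_le_pk_Suc[of k] by (intro divide_left_mono) simp_all
  then have "prime_pi (real N / real (pk (Suc k))) \<le> prime_pi (real N / real (pk k))"
    by (rule prime_pi_mono)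
  moreover have "prime_pi (real N) = card {p. prime p \<and> p \<le> N}"
    by (simp add: prime_pi_def)
  ultimately show ?thesis
    unfolding degdist_def card_degree_class by (simp add: of_nat_diff)
qed

end
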